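(* Let $X$ be a real Banach space and let $x, y \in X$ be non-zero. Consider the conditions: (i) there exist $\lambda > 0$ and $r>0$ such that the open ball $B(\lambda x, r)$ contains $y$ but does not contain $0$; (ii) there exist $\lambda < 0$ and $r>0$ such that the open ball $B(\lambda x, r)$ contains $y$ but does not contain $0$. Then at most one of (i), (ii) holds. Moreover, neither (i) nor (ii) holds if and only if $x \perp_B y$.
   Context: $B(c, r) = \{ z \in X : \|c - z\| < r\}$. For $x, y \in X$, $x$ is Birkhoff–James orthogonal to $y$, written $x \perp_B y$, if $\|x + \mu y\| \geq \|x\|$ for all $\mu \in \mathbb{R}$. *)

theory Defs
  imports "HOL-Analysis.Analysis"
begin

definition bj_orth :: "'a::real_normed_vector \<Rightarrow> 'a \<Rightarrow> bool" where
  "bj_orth x y \<longleftrightarrow> (\<forall>\<mu>::real. norm (x + \<mu> *\<^sub>R y) \<ge> norm x)"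

end

theory Submission
  imports Defs
begin

text \<open>A ball around \<open>\<lambda>x\<close> that contains \<open>y\<close> but not \<open>0\<close> exists exactly when
  \<open>\<lambda>x\<close> is closer to \<open>y\<close> than to \<open>0\<close>; rescaling by \<open>1/\<lambda>\<close> turns this into
  \<open>\<parallel>x - y/\<lambda>\<parallel> < \<parallel>x\<parallel>\<close>. So (i) and (ii) say that \<open>\<mu> \<mapsto> \<parallel>x + \<mu>y\<parallel>\<close> drops below its
  value at \<open>0\<close> somewhere on \<open>\<mu> < 0\<close>, resp. on \<open>\<mu> > 0\<close>. This function is convex, so it
  cannot do both, and it does neither iff it is minimal at \<open>0\<close>, i.e. iff \<open>x \<perp>\<^sub>B y\<close>.\<close>

lemma ball_contains_but_avoids_0_iff:
  fixes c y :: "'a::real_normed_vector"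
  shows "(\<exists>r>0. y \<in> ball c r \<and> 0 \<notin> ball c r) \<longleftrightarrow> dist c y < norm c"
proof
  assume "dist c y < norm c"
  moreover from this have "norm c > 0"
    using zero_le_dist[of c y] by linarith
  ultimately show "\<exists>r>0. y \<in> ball c r \<and> 0 \<notin> ball c r"
    by (intro exI[of _ "norm c"]) simp
qed auto

lemma dist_scaleR_lt_norm_iff:
  fixes x y :: "'a::real_normed_vector"
  assumes "l \<noteq> 0"
  shows "dist (l *\<^sub>R x) y < norm (l *\<^sub>R x) \<longleftrightarrow> norm (x + (-1/l) *\<^sub>R y) < norm x"
proof -
  have "l *\<^sub>R x - y = l *\<^sub>R (x + (-1/l) *\<^sub>R y)"
    using assms by (simp add: algebra_simps)
  then show ?thesis
    using assms by (simp add: dist_norm)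
qed

lemma ex_reparametrize_neg_inverse:
  "(\<exists>l::real. Q l \<and> P (-1/l)) \<longleftrightarrow> (\<exists>m. Q (-1/m) \<and> P m)"
proof
  assume "\<exists>l. Q l \<and> P (-1/l)"
  then obtain l where "Q (-1/(-1/l))" "P (-1/l)" by auto
  then show "\<exists>m. Q (-1/m) \<and> P m" by blast
next
  assume "\<exists>m. Q (-1/m) \<and> P m"
  then obtain m where "Q (-1/m)" "P (-1/(-1/m))" by auto
  then show "\<exists>l. Q l \<and> P (-1/l)" by blast
qed

lemma ex_ball_around_multiple_iff:
  fixes x y :: "'a::real_normed_vector"
  assumes "\<And>l. S l \<Longrightarrow> l \<noteq> 0"
  shows "(\<exists>l. S l \<and> (\<exists>r>0. y \<in> ball (l *\<^sub>R x) r \<and> 0 \<notin> ball (l *\<^sub>R x) r))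
           \<longleftrightarrow> (\<exists>m. S (-1/m) \<and> norm (x + m *\<^sub>R y) < norm x)"
proof -
  have "(\<exists>l. S l \<and> (\<exists>r>0. y \<in> ball (l *\<^sub>R x) r \<and> 0 \<notin> ball (l *\<^sub>R x) r))
      \<longleftrightarrow> (\<exists>l. S l \<and> norm (x + (-1/l) *\<^sub>R y) < norm x)"
    unfolding ball_contains_but_avoids_0_iff by (rule ex_cong) (rule dist_scaleR_lt_norm_iff[OF assms])
  also have "\<dots> \<longleftrightarrow> (\<exists>m. S (-1/m) \<and> norm (x + m *\<^sub>R y) < norm x)"
    by (rule ex_reparametrize_neg_inverse)
  finally show ?thesis .
qed

lemma convex_on_norm_along_line:
  fixes x y :: "'a::real_normed_vector"
  shows "convex_on UNIV (\<lambda>\<mu>::real. norm (x + \<mu> *\<^sub>R y))"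
proof (rule convex_onI)
  fix t u v :: real
  assume t: "0 < t" "t < 1"
  have "x + ((1 - t) * u + t * v) *\<^sub>R y = (1 - t) *\<^sub>R (x + u *\<^sub>R y) + t *\<^sub>R (x + v *\<^sub>R y)"
    by (simp add: algebra_simps)
  also have "norm \<dots> \<le> (1 - t) * norm (x + u *\<^sub>R y) + t * norm (x + v *\<^sub>R y)"
    using t by (intro norm_triangle_le add_mono) simp_all
  finally show "norm (x + ((1 - t) *\<^sub>R u + t *\<^sub>R v) *\<^sub>R y)
      \<le> (1 - t) * norm (x + u *\<^sub>R y) + t * norm (x + v *\<^sub>R y)"
    by simp
qed simp

lemma convex_on_le_max_across:
  fixes f :: "real \<Rightarrow> real"
  assumes "convex_on UNIV f" and "a < c" and "c < b"
  shows "f c \<le> max (f a) (f b)"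
proof -
  define t where "t = (c - a) / (b - a)"
  have t: "0 \<le> t" "t \<le> 1"
    using assms unfolding t_def by (auto simp: divide_le_eq_1)
  have "t * (b - a) = c - a"
    using assms by (simp add: t_def)
  then have "c = (1 - t) *\<^sub>R a + t *\<^sub>R b"
    by (simp add: algebra_simps)
  then have "f c \<le> (1 - t) * f a + t * f b"
    using convex_onD[OF assms(1) t] by simp
  also have "\<dots> \<le> (1 - t) * max (f a) (f b) + t * max (f a) (f b)"
    using t by (intro add_mono mult_left_mono) simp_all
  also have "\<dots> = max (f a) (f b)"
    by (simp add: algebra_simps)
  finally show ?thesis .
qed

lemma norm_along_line_not_below_on_both_sides:
  fixes x y :: "'a::real_normed_vector"
  shows "\<not> ((\<exists>m<0. norm (x + m *\<^sub>R y) < norm x) \<and> (\<exists>m>0. norm (x + m *\<^sub>R y) < norm x))"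
proof
  assume "(\<exists>m<0. norm (x + m *\<^sub>R y) < norm x) \<and> (\<exists>m>0. norm (x + m *\<^sub>R y) < norm x)"
  then obtain a b where "a < 0" "norm (x + a *\<^sub>R y) < norm x" "0 < b" "norm (x + b *\<^sub>R y) < norm x"
    by blast
  moreover have "norm (x + 0 *\<^sub>R y) \<le> max (norm (x + a *\<^sub>R y)) (norm (x + b *\<^sub>R y))"
    using convex_on_le_max_across[OF convex_on_norm_along_line \<open>a < 0\<close> \<open>0 < b\<close>] .
  ultimately show False
    by simp
qed

lemma bj_orth_iff_not_below_on_either_side:
  "bj_orth x y \<longleftrightarrow>
     \<not> (\<exists>m<0. norm (x + m *\<^sub>R y) < norm x) \<and> \<not> (\<exists>m>0. norm (x + m *\<^sub>R y) < norm x)"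
proof -
  have "bj_orth x y \<longleftrightarrow> \<not> (\<exists>m. norm (x + m *\<^sub>R y) < norm x)"
    unfolding bj_orth_def by (simp add: not_less)
  moreover have "m < 0 \<or> m > 0" if "norm (x + m *\<^sub>R y) < norm x" for m
    using that by (cases "m = 0") auto
  ultimately show ?thesis
    by blast
qed

theorem mainTheorem3:
  fixes x y :: "'a::banach"
  assumes "x \<noteq> 0" and "y \<noteq> 0"
  shows "\<not> ((\<exists>l>0. \<exists>r>0. y \<in> ball (l *\<^sub>R x) r \<and> 0 \<notin> ball (l *\<^sub>R x) r)
            \<and> (\<exists>l<0. \<exists>r>0. y \<in> ball (l *\<^sub>R x) r \<and> 0 \<notin> ball (l *\<^sub>R x) r))
         \<and> ((\<not> (\<exists>l>0. \<exists>r>0. y \<in> ball (l *\<^sub>R x) r \<and> 0 \<notin> ball (l *\<^sub>R x) r)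
             \<and> \<not> (\<exists>l<0. \<exists>r>0. y \<in> ball (l *\<^sub>R x) r \<and> 0 \<notin> ball (l *\<^sub>R x) r))
            \<longleftrightarrow> bj_orth x y)"
proof -
  have "(\<exists>l>0. \<exists>r>0. y \<in> ball (l *\<^sub>R x) r \<and> 0 \<notin> ball (l *\<^sub>R x) r)
      \<longleftrightarrow> (\<exists>m<0. norm (x + m *\<^sub>R y) < norm x)"
    using ex_ball_around_multiple_iff[where S = "\<lambda>l. l > 0"] by simp
  moreover have "(\<exists>l<0. \<exists>r>0. y \<in> ball (l *\<^sub>R x) r \<and> 0 \<notin> ball (l *\<^sub>R x) r)
      \<longleftrightarrow> (\<exists>m>0. norm (x + m *\<^sub>R y) < norm x)"
    using ex_ball_around_multiple_iff[where S = "\<lambda>l. l < 0"] by simp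
  ultimately show ?thesis
    using norm_along_line_not_below_on_both_sides[of x y] bj_orth_iff_not_below_on_either_side[of x y]
    by blast
qed

end
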